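(* Let $n\ge1$, let $a=x_0<x_1<\dots<x_n=b$ be a partition of $[a,b]$, and let $Z$ be the $(n+1)\times(n+1)$ matrix with entries $Z_{jk}=l_k'(x_j)$, where $l_k$ are the Lagrange basis polynomials of the partition. Let $P(z)=a_kz^k+a_{k+1}z^{k+1}+\dots+a_mz^m$ be a real polynomial with $0\le k\le n$, $k\le m$ and $a_k\ne0$. Then $\operatorname{rank} Z=n$, $Z^{n+1}=0$, and $\operatorname{rank} P(Z)=\operatorname{rank} Z^k=n+1-k$.
   Context: $l_k(x)=\prod_{m\ne k}(x-x_m)/\prod_{m\ne k}(x_k-x_m)$ for $k=0,\dots,n$. The matrix $Z$ is the finite dimensional (Lie-algebraic) representation of $d/dx$, so $P(Z)$ represents the operator $a_k\frac{d^k}{dx^k}+\dots+a_m\frac{d^m}{dx^m}$. *)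

theory Defs
  imports "Jordan_Normal_Form.DL_Rank" "HOL-Computational_Algebra.Polynomial"
begin

definition lagrange_basis :: "(nat \<Rightarrow> real) \<Rightarrow> nat \<Rightarrow> nat \<Rightarrow> real poly" where
  "lagrange_basis x n k =
     Polynomial.smult (1 / (\<Prod>m\<in>{0..n} - {k}. (x k - x m))) (\<Prod>m\<in>{0..n} - {k}. [:- x m, 1:])"

definition diff_mat :: "(nat \<Rightarrow> real) \<Rightarrow> nat \<Rightarrow> real mat" where
  "diff_mat x n = mat (n+1) (n+1) (\<lambda>(j,k). poly (pderiv (lagrange_basis x n k)) (x j))"

definition poly_mat :: "nat \<Rightarrow> 'a::comm_ring_1 poly \<Rightarrow> 'a mat \<Rightarrow> 'a mat" where
  "poly_mat d p A = mat d d (\<lambda>(r,c). \<Sum>i\<le>degree p. coeff p i * (A ^\<^sub>m i) $$ (r,c))"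

end

theory Submission
  imports Defs
begin

(*
  Let R_n be the space of real polynomials of degree at most n and let
  E(p) = (p(x_0), ..., p(x_n)) be the vector of values of p at the (distinct) nodes.
  By Lagrange interpolation E : R_n -> R^(n+1) is a linear bijection, and the
  interpolation formula p = sum_k p(x_k) l_k shows Z E(p) = E(p'): the matrix Z is
  differentiation written in node values.  Consequently P(Z) E(p) = E(P(D) p) with
  P(D) = sum_i a_i d^i/dx^i, and Z^(n+1) = 0 because the (n+1)-st derivative kills R_n.

  For the rank we multiply P(Z) by the (invertible) Vandermonde matrix, whose columns are
  E(x^j).  The columns of the product are E(P(D) x^j): they vanish for j < k, while for
  j = k + l the polynomial P(D) x^j has degree exactly l.  Such a triangular family is
  linearly independent, hence so are its node values, and rank P(Z) = n + 1 - k.  The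
  theorem follows by applying this to P, to z^k and to z.
*)

section \<open>Lagrange interpolation\<close>

lemma increasing_nodes_inj_on:
  fixes x :: "nat \<Rightarrow> 'a::linorder"
  assumes "\<And>i. i < n \<Longrightarrow> x i < x (Suc i)"
  shows "inj_on x {0..n}"
proof -
  have less: "x i < x j" if "i < j" "j \<le> n" for i j
    using that
  proof (induction j)
    case (Suc j)
    then have "x j < x (Suc j)" using assms by simp
    then show ?case using Suc by (cases "i = j") auto
  qed simp
  show ?thesis
    by (rule inj_onI) (metis atLeastAtMost_iff less less_irrefl linorder_neqE_nat)
qed

lemma poly_eq_0_if_zero_at_nodes:
  fixes q :: "real poly"
  assumes inj: "inj_on x {0..n}" and deg: "degree q \<le> n"
    and zero: "\<And>j. j \<le> n \<Longrightarrow> poly q (x j) = 0"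
  shows "q = 0"
proof (rule poly_eqI_degree[of "x ` {0..n}"])
  have "card (x ` {0..n}) = n + 1" using card_image[OF inj] by simp
  then show "degree q < card (x ` {0..n})" "degree (0::real poly) < card (x ` {0..n})"
    using deg by auto
qed (use zero in auto)

lemma lagrange_basis_at_node:
  assumes inj: "inj_on x {0..n}" and "j \<le> n" and "k \<le> n"
  shows "poly (lagrange_basis x n k) (x j) = (if j = k then 1 else 0)"
proof -
  have "poly (lagrange_basis x n k) (x j) =
      (\<Prod>m\<in>{0..n} - {k}. x j - x m) / (\<Prod>m\<in>{0..n} - {k}. x k - x m)"
    by (simp add: lagrange_basis_def poly_prod)
  moreover have "(\<Prod>m\<in>{0..n} - {k}. x k - x m) \<noteq> 0"
    using inj \<open>k \<le> n\<close> by (auto simp: inj_on_eq_iff)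
  moreover have "(\<Prod>m\<in>{0..n} - {k}. x j - x m) = 0" if "j \<noteq> k"
    using that \<open>j \<le> n\<close> by (auto intro!: bexI[of _ j])
  ultimately show ?thesis by auto
qed

lemma degree_lagrange_basis:
  assumes "k \<le> n"
  shows "degree (lagrange_basis x n k) \<le> n"
proof -
  have "degree (\<Prod>m\<in>{0..n} - {k}. [:- x m, 1:]) \<le> (\<Sum>m\<in>{0..n} - {k}. degree [:- x m, 1:])"
    using degree_prod_sum_le[of "{0..n} - {k}" "\<lambda>m. [:- x m, 1:]"] by (simp add: o_def)
  also have "\<dots> = n" using assms by (simp add: card_Diff_singleton)
  finally show ?thesis
    unfolding lagrange_basis_def using degree_smult_le order_trans by blast
qed

definition interpolant :: "(nat \<Rightarrow> real) \<Rightarrow> nat \<Rightarrow> (nat \<Rightarrow> real) \<Rightarrow> real poly" where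
  "interpolant x n y = (\<Sum>k\<le>n. Polynomial.smult (y k) (lagrange_basis x n k))"

lemma degree_interpolant: "degree (interpolant x n y) \<le> n"
  unfolding interpolant_def
  by (rule degree_sum_le) (auto intro!: order_trans[OF degree_smult_le] degree_lagrange_basis)

lemma interpolant_at_node:
  assumes inj: "inj_on x {0..n}" and "j \<le> n"
  shows "poly (interpolant x n y) (x j) = y j"
proof -
  have "poly (interpolant x n y) (x j) = (\<Sum>k\<le>n. if k = j then y k else 0)"
    unfolding interpolant_def poly_sum
    by (intro sum.cong) (auto simp: lagrange_basis_at_node[OF inj \<open>j \<le> n\<close>])
  then show ?thesis using \<open>j \<le> n\<close> by simp
qed

lemma interpolant_of_values:
  assumes inj: "inj_on x {0..n}" and deg: "degree p \<le> n"
  shows "interpolant x n (\<lambda>k. poly p (x k)) = p"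
proof -
  have "interpolant x n (\<lambda>k. poly p (x k)) - p = 0"
    using inj degree_diff_le[OF degree_interpolant deg]
    by (rule poly_eq_0_if_zero_at_nodes) (simp add: interpolant_at_node[OF inj])
  then show ?thesis by simp
qed

section \<open>Node values and the differentiation matrix\<close>

definition node_values :: "(nat \<Rightarrow> real) \<Rightarrow> nat \<Rightarrow> real poly \<Rightarrow> real vec" where
  "node_values x n p = vec (n+1) (\<lambda>j. poly p (x j))"

lemma node_values_carrier [simp]: "node_values x n p \<in> carrier_vec (n+1)"
  by (simp add: node_values_def)

lemma node_values_0 [simp]: "node_values x n 0 = 0\<^sub>v (n+1)"
  by (rule eq_vecI) (auto simp: node_values_def)

lemma node_values_eq_0_imp:
  assumes inj: "inj_on x {0..n}" and "degree p \<le> n" and "node_values x n p = 0\<^sub>v (n+1)"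
  shows "p = 0"
proof (rule poly_eq_0_if_zero_at_nodes[OF inj \<open>degree p \<le> n\<close>])
  fix j assume "j \<le> n"
  then show "poly p (x j) = 0"
    using arg_cong[OF \<open>node_values x n p = 0\<^sub>v (n+1)\<close>, of "\<lambda>v. v $ j"]
    by (simp add: node_values_def)
qed

lemma node_values_surj:
  assumes inj: "inj_on x {0..n}" and "y \<in> carrier_vec (n+1)"
  obtains p where "degree p \<le> n" "node_values x n p = y"
proof
  show "degree (interpolant x n (\<lambda>j. y $ j)) \<le> n" by (rule degree_interpolant)
  show "node_values x n (interpolant x n (\<lambda>j. y $ j)) = y"
    using assms by (intro eq_vecI) (auto simp: node_values_def interpolant_at_node)
qed

lemma diff_mat_carrier [simp]: "diff_mat x n \<in> carrier_mat (n+1) (n+1)"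
  and diff_mat_dim [simp]: "dim_row (diff_mat x n) = n+1" "dim_col (diff_mat x n) = n+1"
  by (simp_all add: diff_mat_def)

lemma pderiv_sum: "pderiv (sum f A) = (\<Sum>a\<in>A. pderiv (f a))"
  using higher_pderiv_sum[of 1] by simp

text \<open>Z is differentiation in node values: differentiate the interpolation formula.\<close>
lemma diff_mat_mult_node_values:
  assumes inj: "inj_on x {0..n}" and deg: "degree p \<le> n"
  shows "diff_mat x n *\<^sub>v node_values x n p = node_values x n (pderiv p)"
proof (rule eq_vecI)
  fix j assume "j < dim_vec (node_values x n (pderiv p))"
  then have j: "j < n+1" by (simp add: node_values_def)
  have "(diff_mat x n *\<^sub>v node_values x n p) $ j
      = (\<Sum>k<n+1. poly (pderiv (lagrange_basis x n k)) (x j) * poly p (x k))"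
    using j by (simp add: diff_mat_def node_values_def scalar_prod_def atLeast0LessThan)
  also have "\<dots> = poly (pderiv (interpolant x n (\<lambda>k. poly p (x k)))) (x j)"
    by (simp add: interpolant_def pderiv_sum pderiv_smult poly_sum mult.commute lessThan_Suc_atMost)
  also have "\<dots> = node_values x n (pderiv p) $ j"
    using j by (simp add: interpolant_of_values[OF inj deg] node_values_def)
  finally show "(diff_mat x n *\<^sub>v node_values x n p) $ j = node_values x n (pderiv p) $ j" .
qed (simp add: node_values_def diff_mat_def)

lemma diff_mat_pow_mult_node_values:
  assumes inj: "inj_on x {0..n}" and "degree p \<le> n"
  shows "diff_mat x n ^\<^sub>m i *\<^sub>v node_values x n p = node_values x n ((pderiv ^^ i) p)"
  using \<open>degree p \<le> n\<close>
proof (induction i arbitrary: p)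
  case 0
  then show ?case by (simp add: node_values_def diff_mat_def)
next
  case (Suc i)
  let ?Z = "diff_mat x n"
  have "?Z ^\<^sub>m Suc i *\<^sub>v node_values x n p = ?Z ^\<^sub>m i *\<^sub>v (?Z *\<^sub>v node_values x n p)"
    using assoc_mult_mat_vec[OF pow_carrier_mat[OF diff_mat_carrier] diff_mat_carrier node_values_carrier]
    by simp
  also have "\<dots> = node_values x n ((pderiv ^^ i) (pderiv p))"
    using Suc by (simp add: diff_mat_mult_node_values[OF inj] degree_pderiv)
  finally show ?case by (simp add: funpow_Suc_right del: funpow.simps)
qed

definition diff_operator :: "'a::{comm_semiring_1,semiring_no_zero_divisors} poly \<Rightarrow> 'a poly \<Rightarrow> 'a poly" where
  "diff_operator P p = (\<Sum>i\<le>degree P. Polynomial.smult (coeff P i) ((pderiv ^^ i) p))"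

lemma poly_mat_carrier [simp]: "poly_mat d P A \<in> carrier_mat d d"
  by (simp add: poly_mat_def)

lemma poly_mat_diff_mat_mult_node_values:
  assumes inj: "inj_on x {0..n}" and deg: "degree p \<le> n"
  shows "poly_mat (n+1) P (diff_mat x n) *\<^sub>v node_values x n p = node_values x n (diff_operator P p)"
proof (rule eq_vecI)
  let ?Z = "diff_mat x n" and ?E = "node_values x n p"
  fix r assume "r < dim_vec (node_values x n (diff_operator P p))"
  then have r: "r < n+1" by (simp add: node_values_def)
  have "(poly_mat (n+1) P ?Z *\<^sub>v ?E) $ r
      = (\<Sum>c\<in>{0..<n+1}. (\<Sum>i\<le>degree P. coeff P i * (?Z ^\<^sub>m i) $$ (r,c)) * ?E $ c)"
    using r by (simp add: poly_mat_def scalar_prod_def row_def node_values_def)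
  also have "\<dots> = (\<Sum>i\<le>degree P. coeff P i * (\<Sum>c\<in>{0..<n+1}. (?Z ^\<^sub>m i) $$ (r,c) * ?E $ c))"
    by (simp only: sum_distrib_right sum_distrib_left mult.assoc) (rule sum.swap)
  also have "\<dots> = (\<Sum>i\<le>degree P. coeff P i * (?Z ^\<^sub>m i *\<^sub>v ?E) $ r)"
    using r by (simp add: scalar_prod_def row_def node_values_def)
  also have "\<dots> = node_values x n (diff_operator P p) $ r"
    using r by (simp only: diff_mat_pow_mult_node_values[OF inj deg])
      (simp add: node_values_def diff_operator_def poly_sum)
  finally show "(poly_mat (n+1) P ?Z *\<^sub>v ?E) $ r = node_values x n (diff_operator P p) $ r" .
qed (simp add: node_values_def poly_mat_def)

definition vandermonde :: "(nat \<Rightarrow> real) \<Rightarrow> nat \<Rightarrow> real mat" where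
  "vandermonde x n = mat (n+1) (n+1) (\<lambda>(j,i). x j ^ i)"

lemma vandermonde_carrier [simp]: "vandermonde x n \<in> carrier_mat (n+1) (n+1)"
  by (simp add: vandermonde_def)

lemma col_vandermonde: "j < n+1 \<Longrightarrow> col (vandermonde x n) j = node_values x n (monom 1 j)"
  by (rule eq_vecI) (auto simp: vandermonde_def node_values_def poly_monom)

lemma vandermonde_mult_coeffs:
  assumes "degree p \<le> n"
  shows "vandermonde x n *\<^sub>v vec (n+1) (coeff p) = node_values x n p"
proof (rule eq_vecI)
  fix j assume "j < dim_vec (node_values x n p)"
  then have "j < n+1" by (simp add: node_values_def)
  then have "(vandermonde x n *\<^sub>v vec (n+1) (coeff p)) $ j = (\<Sum>i\<le>n. coeff p i * x j ^ i)"
    by (simp add: vandermonde_def scalar_prod_def atLeast0LessThan lessThan_Suc_atMost mult.commute)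
  also have "\<dots> = poly (\<Sum>i\<le>n. monom (coeff p i) i) (x j)"
    by (simp add: poly_sum poly_monom)
  also have "\<dots> = poly p (x j)"
    by (simp only: poly_as_sum_of_monoms'[OF assms])
  finally show "(vandermonde x n *\<^sub>v vec (n+1) (coeff p)) $ j = node_values x n p $ j"
    using \<open>j < n+1\<close> by (simp add: node_values_def)
qed (simp add: node_values_def vandermonde_def)

lemma vandermonde_surj:
  assumes inj: "inj_on x {0..n}" and y: "y \<in> carrier_vec (n+1)"
  shows "\<exists>z\<in>carrier_vec (n+1). vandermonde x n *\<^sub>v z = y"
proof -
  obtain p where "degree p \<le> n" "node_values x n p = y"
    using node_values_surj[OF inj y] .
  then show ?thesis
    using vandermonde_mult_coeffs[of p n x] by (intro bexI[of _ "vec (n+1) (coeff p)"]) auto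
qed

section \<open>Rank facts for matrices\<close>

lemma mult_unit_vec_eq_col:
  fixes M :: "'a::field mat"
  assumes "M \<in> carrier_mat m nc" and "i < nc"
  shows "M *\<^sub>v unit_vec nc i = col M i"
  using assms by (intro eq_vecI) auto

lemma mat_eq_0_if_mult_vec_0:
  fixes M :: "'a::field mat"
  assumes M: "M \<in> carrier_mat m nc"
    and zero: "\<And>v. v \<in> carrier_vec nc \<Longrightarrow> M *\<^sub>v v = 0\<^sub>v m"
  shows "M = 0\<^sub>m m nc"
proof (rule eq_matI)
  fix i j assume "i < dim_row (0\<^sub>m m nc)" "j < dim_col (0\<^sub>m m nc)"
  then have "i < m" "j < nc" by auto
  then have "M $$ (i,j) = (M *\<^sub>v unit_vec nc j) $ i"
    using M by (simp add: mult_unit_vec_eq_col)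
  then show "M $$ (i,j) = 0\<^sub>m m nc $$ (i,j)"
    using zero[of "unit_vec nc j"] \<open>i < m\<close> \<open>j < nc\<close> by simp
qed (use M in auto)

context vec_space
begin

text \<open>Right multiplication by a surjective square matrix keeps the column space, hence the rank.\<close>
lemma rank_mult_surj:
  assumes A: "A \<in> carrier_mat n nc" and B: "B \<in> carrier_mat nc nc"
    and surj: "\<And>y. y \<in> carrier_vec nc \<Longrightarrow> \<exists>z\<in>carrier_vec nc. B *\<^sub>v z = y"
  shows "rank (A * B) = rank A"
proof -
  have "(\<exists>z\<in>carrier_vec nc. (A * B) *\<^sub>v z = y) \<longleftrightarrow> (\<exists>z\<in>carrier_vec nc. A *\<^sub>v z = y)" for y
  proof
    assume "\<exists>z\<in>carrier_vec nc. (A * B) *\<^sub>v z = y"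
    then show "\<exists>z\<in>carrier_vec nc. A *\<^sub>v z = y"
      using A B by (metis assoc_mult_mat_vec mult_mat_vec_carrier)
  next
    assume "\<exists>z\<in>carrier_vec nc. A *\<^sub>v z = y"
    then show "\<exists>z\<in>carrier_vec nc. (A * B) *\<^sub>v z = y"
      using A B surj by (metis assoc_mult_mat_vec)
  qed
  then have "col_space (A * B) = col_space A"
    using col_space_eq[OF mult_carrier_mat[OF A B]] col_space_eq[OF A] A B by simp
  then show ?thesis unfolding rank_def col_space_def by simp
qed

lemma lin_indpt_cols_if_kernel_trivial:
  assumes M: "M \<in> carrier_mat n nc"
    and ker: "\<And>v. v \<in> carrier_vec nc \<Longrightarrow> M *\<^sub>v v = 0\<^sub>v n \<Longrightarrow> v = 0\<^sub>v nc"
  shows "distinct (cols M)" "lin_indpt (set (cols M))"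
proof -
  show dist: "distinct (cols M)"
  proof (rule ccontr)
    assume "\<not> distinct (cols M)"
    then obtain i j where "i \<noteq> j" "i < nc" "j < nc" "col M i = col M j"
      using M by (auto simp: distinct_conv_nth)
    moreover define v :: "'a vec" where "v = unit_vec nc i - unit_vec nc j"
    ultimately have "M *\<^sub>v v = 0\<^sub>v n"
      using M by (simp add: mult_minus_distrib_mat_vec mult_unit_vec_eq_col)
    then have "v $ i = 0" using ker[of v] \<open>i < nc\<close> by (simp add: v_def)
    then show False using \<open>i \<noteq> j\<close> \<open>i < nc\<close> \<open>j < nc\<close> by (simp add: v_def)
  qed
  show "lin_indpt (set (cols M))"
    using lin_depE[OF M _ dist] ker by blast
qed

lemma rank_eq_length_indpt_cols:
  assumes A: "A \<in> carrier_mat n nc" and ws: "set ws \<subseteq> carrier_vec n"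
    and sub: "set ws \<subseteq> set (cols A)" "set (cols A) \<subseteq> insert (0\<^sub>v n) (set ws)"
    and ker: "\<And>v. v \<in> carrier_vec (length ws) \<Longrightarrow> mat_of_cols n ws *\<^sub>v v = 0\<^sub>v n
                \<Longrightarrow> v = 0\<^sub>v (length ws)"
  shows "rank A = length ws"
proof -
  have M: "mat_of_cols n ws \<in> carrier_mat n (length ws)" by simp
  have "cols (mat_of_cols n ws) = ws" using ws by simp
  then have dist: "distinct ws" and indpt: "lin_indpt (set ws)"
    using lin_indpt_cols_if_kernel_trivial[OF M ker] by auto
  have "maximal (set ws) (\<lambda>T. T \<subseteq> set (cols A) \<and> lin_indpt T)"
    unfolding maximal_def
  proof (intro conjI allI impI sub(1) indpt)
    fix T assume T: "set ws \<subseteq> T \<and> T \<subseteq> set (cols A) \<and> lin_indpt T"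
    have "T \<subseteq> carrier_vec n" using T A cols_dim by blast
    moreover have "(UNIV :: 'a set) \<noteq> {0}" by (metis UNIV_I singletonD zero_neq_one)
    ultimately have "0\<^sub>v n \<notin> T" using T zero_nin_lin_indpt by blast
    then show "T = set ws" using T sub(2) by blast
  qed
  then show ?thesis using rank_card_indpt[OF A] distinct_card[OF dist] by simp
qed

end

section \<open>The degree behaviour of P(D)\<close>

lemma higher_pderiv_eq_0:
  fixes p :: "'a::{comm_semiring_1,semiring_no_zero_divisors,semiring_char_0} poly"
  assumes "degree p < i"
  shows "(pderiv ^^ i) p = 0"
  using assms by (intro poly_eqI) (simp add: coeff_higher_pderiv coeff_eq_0)

lemma coeff_diff_operator:
  "coeff (diff_operator P p) m
     = (\<Sum>i\<le>degree P. coeff P i * pochhammer (of_nat (Suc m)) i * coeff p (m + i))"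
  by (simp add: diff_operator_def coeff_sum coeff_higher_pderiv mult.assoc)

text \<open>From now on P(z) = a_k z^k + a_(k+1) z^(k+1) + ... with a_k nonzero: then P(D) lowers
  the degree by exactly k, and annihilates the polynomials of degree below k.\<close>
context
  fixes P :: "'a::field_char_0 poly" and k :: nat
  assumes low: "\<And>i. i < k \<Longrightarrow> coeff P i = 0" and lowest: "coeff P k \<noteq> 0"
begin

lemma diff_operator_eq_0:
  assumes "degree p < k"
  shows "diff_operator P p = 0"
  unfolding diff_operator_def
proof (intro sum.neutral ballI)
  fix i
  show "Polynomial.smult (coeff P i) ((pderiv ^^ i) p) = 0"
    using assms low[of i] higher_pderiv_eq_0[of p i] by (cases "i < k") auto
qed

lemma coeff_diff_operator_eq_0:
  assumes "degree p - k < m"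
  shows "coeff (diff_operator P p) m = 0"
  unfolding coeff_diff_operator
proof (intro sum.neutral ballI)
  fix i
  show "coeff P i * pochhammer (of_nat (Suc m)) i * coeff p (m + i) = 0"
    using assms low[of i] coeff_eq_0[of p "m + i"] by (cases "i < k") auto
qed

lemma degree_diff_operator: "degree (diff_operator P p) \<le> degree p - k"
  by (rule degree_le) (simp add: coeff_diff_operator_eq_0)

lemma coeff_diff_operator_top:
  assumes "k \<le> degree p"
  shows "coeff (diff_operator P p) (degree p - k)
           = coeff P k * pochhammer (of_nat (Suc (degree p - k))) k * lead_coeff p"
proof -
  have "k \<le> degree P" using lowest le_degree by blast
  let ?term = "\<lambda>i. coeff P i * pochhammer (of_nat (Suc (degree p - k))) i * coeff p (degree p - k + i)"
  have "?term i = 0" if "i \<noteq> k" for i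
    using that low[of i] coeff_eq_0[of p "degree p - k + i"] assms by (cases "i < k") auto
  then have "(\<Sum>i\<in>{..degree P} - {k}. ?term i) = 0" by (intro sum.neutral) auto
  moreover have "coeff (diff_operator P p) (degree p - k) = ?term k + (\<Sum>i\<in>{..degree P} - {k}. ?term i)"
    unfolding coeff_diff_operator using \<open>k \<le> degree P\<close> by (intro sum.remove) auto
  ultimately show ?thesis using assms by simp
qed

lemma coeff_diff_operator_top_neq_0:
  assumes "k \<le> degree p" "p \<noteq> 0"
  shows "coeff (diff_operator P p) (degree p - k) \<noteq> 0"
proof -
  have "pochhammer (Suc (degree p - k)) k > 0" by (rule pochhammer_pos) simp
  then have "pochhammer (of_nat (Suc (degree p - k)) :: 'a) k \<noteq> 0"
    unfolding pochhammer_of_nat of_nat_eq_0_iff by simp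
  then show ?thesis using assms lowest by (simp add: coeff_diff_operator_top)
qed

end

section \<open>Rank of P(Z)\<close>

lemma triangular_polys_independent:
  fixes q :: "nat \<Rightarrow> 'a::idom poly"
  assumes deg: "\<And>l. l < N \<Longrightarrow> degree (q l) \<le> l"
    and top: "\<And>l. l < N \<Longrightarrow> coeff (q l) l \<noteq> 0"
    and comb: "(\<Sum>l<N. Polynomial.smult (c l) (q l)) = 0"
  shows "\<forall>l<N. c l = 0"
  using assms
proof (induction N)
  case (Suc N)
  have "coeff (q l) N = 0" if "l < N" for l
    using Suc.prems(1)[of l] that by (intro coeff_eq_0) simp
  then have "c N * coeff (q N) N = 0"
    using arg_cong[OF Suc.prems(3), of "\<lambda>r. coeff r N"] by (simp add: coeff_sum)
  then have "c N = 0" using Suc.prems(2)[of N] by simp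
  moreover have "\<forall>l<N. c l = 0"
  proof (rule Suc.IH)
    show "(\<Sum>l<N. Polynomial.smult (c l) (q l)) = 0" using Suc.prems(3) \<open>c N = 0\<close> by simp
  qed (use Suc.prems(1,2) in simp_all)
  ultimately show ?case by (simp add: less_Suc_eq)
qed simp

lemma node_values_triangular_kernel:
  fixes q :: "nat \<Rightarrow> real poly"
  assumes inj: "inj_on x {0..n}" and "N \<le> n + 1"
    and deg: "\<And>l. l < N \<Longrightarrow> degree (q l) \<le> l"
    and top: "\<And>l. l < N \<Longrightarrow> coeff (q l) l \<noteq> 0"
    and v: "v \<in> carrier_vec N"
    and ker: "mat_of_cols (n+1) (map (\<lambda>l. node_values x n (q l)) [0..<N]) *\<^sub>v v = 0\<^sub>v (n+1)"
  shows "v = 0\<^sub>v N"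
proof -
  define Q where "Q = (\<Sum>l<N. Polynomial.smult (v $ l) (q l))"
  have "mat_of_cols (n+1) (map (\<lambda>l. node_values x n (q l)) [0..<N]) *\<^sub>v v = node_values x n Q"
    using v by (intro eq_vecI)
      (auto simp: mat_of_cols_def node_values_def Q_def poly_sum scalar_prod_def
         atLeast0LessThan mult.commute)
  moreover have "degree Q \<le> n"
    unfolding Q_def
  proof (intro degree_sum_le)
    fix l assume "l \<in> {..<N}"
    then have "degree (q l) \<le> n" using deg[of l] \<open>N \<le> n + 1\<close> by simp
    then show "degree (Polynomial.smult (v $ l) (q l)) \<le> n" using degree_smult_le order_trans by blast
  qed simp
  ultimately have "Q = 0" using node_values_eq_0_imp[OF inj] ker by simp
  then have "\<forall>l<N. v $ l = 0"
    unfolding Q_def by (rule triangular_polys_independent[rotated 2]) (use deg top in auto)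
  then show ?thesis using v by (intro eq_vecI) auto
qed

lemma col_poly_mat_mult_vandermonde:
  assumes inj: "inj_on x {0..n}" and j: "j < n+1"
  shows "col (poly_mat (n+1) P (diff_mat x n) * vandermonde x n) j
           = node_values x n (diff_operator P (monom 1 j))"
proof -
  have "col (poly_mat (n+1) P (diff_mat x n) * vandermonde x n) j
      = poly_mat (n+1) P (diff_mat x n) *\<^sub>v node_values x n (monom 1 j)"
    using col_mult2[OF poly_mat_carrier vandermonde_carrier j] col_vandermonde[OF j] by simp
  also have "\<dots> = node_values x n (diff_operator P (monom 1 j))"
    using j by (intro poly_mat_diff_mat_mult_node_values[OF inj]) (simp add: degree_monom_eq)
  finally show ?thesis .
qed

lemma rank_poly_mat_diff_mat:
  fixes x :: "nat \<Rightarrow> real" and P :: "real poly"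
  assumes inj: "inj_on x {0..n}" and "k \<le> n"
    and low: "\<And>i. i < k \<Longrightarrow> coeff P i = 0" and lowest: "coeff P k \<noteq> 0"
  shows "vec_space.rank (n+1) (poly_mat (n+1) P (diff_mat x n)) = n + 1 - k"
proof -
  let ?A = "poly_mat (n+1) P (diff_mat x n)" and ?V = "vandermonde x n"
  define r where "r j = diff_operator P (monom 1 j)" for j
  define ws where "ws = map (\<lambda>l. node_values x n (r (l + k))) [0..<n+1-k]"
  have cols: "set (cols (?A * ?V)) = (\<lambda>j. node_values x n (r j)) ` {..<n+1}"
  proof -
    have "set (cols (?A * ?V)) = (\<lambda>j. col (?A * ?V) j) ` {..<n+1}"
      by (simp only: cols_def set_map set_upt atLeast0LessThan index_mult_mat(3) dim_col_mat
          vandermonde_def)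
    then show ?thesis using col_poly_mat_mult_vandermonde[OF inj] by (auto simp: r_def)
  qed
  have "set ws \<subseteq> set (cols (?A * ?V))"
    unfolding cols ws_def by auto
  moreover have "set (cols (?A * ?V)) \<subseteq> insert (0\<^sub>v (n+1)) (set ws)"
  proof
    fix w assume "w \<in> set (cols (?A * ?V))"
    then obtain j where "j < n+1" "w = node_values x n (r j)" unfolding cols by auto
    moreover have "r j = 0" if "j < k"
      using diff_operator_eq_0[OF low lowest] that by (simp add: r_def degree_monom_eq)
    ultimately show "w \<in> insert (0\<^sub>v (n+1)) (set ws)"
      unfolding ws_def by (cases "j < k") (auto intro!: image_eqI[of _ _ "j - k"])
  qed
  moreover have "v = 0\<^sub>v (length ws)"
    if "v \<in> carrier_vec (length ws)" "mat_of_cols (n+1) ws *\<^sub>v v = 0\<^sub>v (n+1)" for v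
    unfolding ws_def length_map length_upt diff_zero
  proof (rule node_values_triangular_kernel[OF inj _ _ _ that[unfolded ws_def length_map length_upt diff_zero]])
    show "degree (r (l + k)) \<le> l" for l
      using degree_diff_operator[OF low lowest, of "monom 1 (l + k)"] by (simp add: r_def degree_monom_eq)
    show "coeff (r (l + k)) l \<noteq> 0" for l
      using coeff_diff_operator_top_neq_0[OF low lowest, of "monom 1 (l + k)"]
      by (simp add: r_def degree_monom_eq)
  qed simp
  moreover have "set ws \<subseteq> carrier_vec (n+1)" using node_values_carrier by (auto simp: ws_def)
  ultimately have "vec_space.rank (n+1) (?A * ?V) = length ws"
    using vec_space.rank_eq_length_indpt_cols[OF mult_carrier_mat[OF poly_mat_carrier vandermonde_carrier]]
    by blast
  then show ?thesis
    using vec_space.rank_mult_surj[OF poly_mat_carrier vandermonde_carrier vandermonde_surj[OF inj]]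
    by (simp add: ws_def)
qed

text \<open>Z^(n+1) = 0: the (n+1)-st derivative kills every polynomial of degree at most n.\<close>
lemma diff_mat_nilpotent:
  assumes inj: "inj_on x {0..n}"
  shows "diff_mat x n ^\<^sub>m (n+1) = 0\<^sub>m (n+1) (n+1)"
proof (rule mat_eq_0_if_mult_vec_0)
  fix v :: "real vec" assume "v \<in> carrier_vec (n+1)"
  then obtain p where deg: "degree p \<le> n" and v: "v = node_values x n p"
    using node_values_surj[OF inj] by metis
  show "diff_mat x n ^\<^sub>m (n+1) *\<^sub>v v = 0\<^sub>v (n+1)"
    unfolding v diff_mat_pow_mult_node_values[OF inj deg]
    using deg by (simp add: higher_pderiv_eq_0 del: funpow.simps)
qed (rule pow_carrier_mat[OF diff_mat_carrier])

lemma poly_mat_monom: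
  assumes A: "A \<in> carrier_mat d d"
  shows "poly_mat d (monom 1 k) A = A ^\<^sub>m k"
proof (rule eq_matI)
  fix i j assume "i < dim_row (A ^\<^sub>m k)" "j < dim_col (A ^\<^sub>m k)"
  then have "i < d" "j < d" using A by (auto split: if_splits)
  then have "poly_mat d (monom 1 k) A $$ (i,j) = (\<Sum>t\<le>k. (if t = k then 1 else 0) * (A ^\<^sub>m t) $$ (i,j))"
    by (simp add: poly_mat_def degree_monom_eq coeff_monom eq_commute[of k])
  also have "\<dots> = (\<Sum>t\<le>k. if t = k then (A ^\<^sub>m t) $$ (i,j) else 0)"
    by (rule sum.cong) auto
  finally show "poly_mat d (monom 1 k) A $$ (i,j) = (A ^\<^sub>m k) $$ (i,j)" by simp
qed (use A in \<open>simp_all add: poly_mat_def\<close>)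

theorem theorem3:
  fixes x :: "nat \<Rightarrow> real" and n k :: nat and a b :: real and P :: "real poly"
  assumes "n \<ge> 1"
    and "x 0 = a" and "x n = b"
    and "\<And>i. i < n \<Longrightarrow> x i < x (Suc i)"
    and "k \<le> n" and "k \<le> degree P"
    and "\<And>i. i < k \<Longrightarrow> coeff P i = 0"
    and "coeff P k \<noteq> 0"
  shows "vec_space.rank (n+1) (diff_mat x n) = n
    \<and> diff_mat x n ^\<^sub>m (n+1) = 0\<^sub>m (n+1) (n+1)
    \<and> vec_space.rank (n+1) (poly_mat (n+1) P (diff_mat x n))
           = vec_space.rank (n+1) (diff_mat x n ^\<^sub>m k)
    \<and> vec_space.rank (n+1) (diff_mat x n ^\<^sub>m k) = n + 1 - k"
proof -
  have inj: "inj_on x {0..n}" using increasing_nodes_inj_on assms(4) by blast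
  have rank_pow: "vec_space.rank (n+1) (diff_mat x n ^\<^sub>m j) = n + 1 - j" if "j \<le> n" for j
  proof -
    have "poly_mat (n+1) (monom 1 j) (diff_mat x n) = diff_mat x n ^\<^sub>m j"
      by (rule poly_mat_monom[OF diff_mat_carrier])
    then show ?thesis using rank_poly_mat_diff_mat[OF inj that, of "monom 1 j"] by (simp add: coeff_monom)
  qed
  have "vec_space.rank (n+1) (diff_mat x n) = n"
    using rank_pow[of 1] \<open>n \<ge> 1\<close> by simp
  moreover have "vec_space.rank (n+1) (poly_mat (n+1) P (diff_mat x n)) = n + 1 - k"
    using rank_poly_mat_diff_mat[OF inj assms(5,7,8)] .
  ultimately show ?thesis
    using rank_pow[OF \<open>k \<le> n\<close>] diff_mat_nilpotent[OF inj] by simp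
qed

end
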